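(* Let $\Omega\subset\mathbb{R}^d$ be a bounded open set, $q\ge0$ an integer and $k\in C^q(\overline{\Omega}\times\overline{\Omega})$. Let $\{(Y_{\vec h},\vec w_{\vec h})\}_{\vec h>0}$ be a stable quadrature scheme and $\{(X_{\vec h},Y_{\vec h},R_{\vec h})\}_{\vec h>0}$ a stable reconstruction scheme. Then the family of linear operators $\mathcal{K}_{\vec h}\colon C^q(\overline{\Omega})\to C^q(\overline{\Omega})$, $\vec h=(h_X,h_Y)$ with $h_X,h_Y>0$, \[ (\mathcal{K}_{\vec h}v)(x)=\sum_{i=1}^{|Y_{\vec h}|}w_{\vec h,i}\,k(x,y_{\vec h,i})\sum_{j=1}^{|X_{\vec h}|}(R_{\vec h})_{ij}\,v(x_{\vec h,j}), \] is collectively compact.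
   Context: $C^q(\overline{\Omega})$ is the Banach space of functions whose partial derivatives up to order $q$ exist on $\Omega$ and extend continuously to $\overline{\Omega}$, with norm $\|v\|_{C^q}=\sum_{|\alpha|\le q}\frac1{\alpha!}\max_{\overline\Omega}|\partial^\alpha v|$. A stable quadrature scheme is a family of finite node sets $Y_{\vec h}=\{y_{\vec h,i}\}\subset\overline\Omega$ and weights $\vec w_{\vec h}\in\mathbb{R}^{|Y_{\vec h}|}$ (depending only on $h_Y$, with $|Y_{\vec h}|\to\infty$ as $h_Y\to0^+$) such that $\|\vec w_{\vec h}\|_1\le C_Q$ for all $\vec h$. A reconstruction scheme is a family of triples $(X_{\vec h},Y_{\vec h},R_{\vec h})$ with $X_{\vec h}=\{x_{\vec h,j}\}\subset\overline\Omega$ finite (depending only on $h_X$) and $R_{\vec h}$ a real $|Y_{\vec h}|\times|X_{\vec h}|$ matrix; it is stable if $\|R_{\vec h}\|_\infty\le C_I$ (maximum absolute row sum) for all $\vec h$. A family $\mathcal{T}$ of bounded operators on a Banach space $V$ is collectively compact if $\{Tv: T\in\mathcal{T},\ v\in V,\ \|v\|\le1\}$ is relatively compact in $V$. *)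

theory Defs
  imports "HOL-Analysis.Analysis"
begin

fun dpart :: "'a::euclidean_space list \<Rightarrow> ('a \<Rightarrow> real) \<Rightarrow> 'a \<Rightarrow> real" where
  "dpart [] f = f"
| "dpart (b # bs) f = (\<lambda>x. deriv (\<lambda>t. dpart bs f (x + t *\<^sub>R b)) 0)"

text \<open>Membership in C^q(closure Omega), Omega open: v is continuous on the closure, all
  partial derivatives up to order q exist on Omega (in every order of differentiation)
  and extend continuously to the closure.\<close>
definition Cq_on :: "'a::euclidean_space set \<Rightarrow> nat \<Rightarrow> ('a \<Rightarrow> real) \<Rightarrow> bool" where
  "Cq_on \<Omega> q v \<longleftrightarrow>
     continuous_on (closure \<Omega>) v \<and>
     (\<forall>bs. set bs \<subseteq> Basis \<and> bs \<noteq> [] \<and> length bs \<le> q \<longrightarrow>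
        (\<forall>x\<in>\<Omega>. (\<lambda>t. dpart (tl bs) v (x + t *\<^sub>R hd bs)) differentiable (at 0)) \<and>
        (\<exists>g. continuous_on (closure \<Omega>) g \<and> (\<forall>x\<in>\<Omega>. g x = dpart bs v x)))"

definition mindex :: "nat \<Rightarrow> ('a::euclidean_space \<Rightarrow> nat) set" where
  "mindex q = {\<alpha>. (\<forall>b. b \<notin> Basis \<longrightarrow> \<alpha> b = 0) \<and> (\<Sum>b\<in>Basis. \<alpha> b) \<le> q}"

definition mfact :: "('a::euclidean_space \<Rightarrow> nat) \<Rightarrow> real" where
  "mfact \<alpha> = (\<Prod>b\<in>Basis. fact (\<alpha> b))"

definition dmulti :: "('a::euclidean_space \<Rightarrow> nat) \<Rightarrow> ('a \<Rightarrow> real) \<Rightarrow> 'a \<Rightarrow> real" where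
  "dmulti \<alpha> v = dpart (SOME bs. set bs \<subseteq> Basis \<and> (\<forall>b. count_list bs b = \<alpha> b)) v"

text \<open>Supremum of |g| over S (= max over the closure of the continuous extension).\<close>
definition supn :: "'a set \<Rightarrow> ('a \<Rightarrow> real) \<Rightarrow> real" where
  "supn S g = (if S = {} then 0 else (SUP x\<in>S. \<bar>g x\<bar>))"

definition Cq_norm :: "'a::euclidean_space set \<Rightarrow> nat \<Rightarrow> ('a \<Rightarrow> real) \<Rightarrow> real" where
  "Cq_norm \<Omega> q v = (\<Sum>\<alpha>\<in>(mindex q :: ('a \<Rightarrow> nat) set). supn \<Omega> (dmulti \<alpha> v) / mfact \<alpha>)"

definition Cq_relcompact :: "'a::euclidean_space set \<Rightarrow> nat \<Rightarrow> ('a \<Rightarrow> real) set \<Rightarrow> bool" where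
  "Cq_relcompact \<Omega> q S \<longleftrightarrow>
     (\<forall>f::nat \<Rightarrow> 'a \<Rightarrow> real. (\<forall>n. f n \<in> S) \<longrightarrow>
        (\<exists>(r::nat\<Rightarrow>nat) g. strict_mono r \<and> Cq_on \<Omega> q g \<and>
               (\<lambda>n. Cq_norm \<Omega> q (\<lambda>x. f (r n) x - g x)) \<longlonglongrightarrow> 0))"

definition collectively_compact ::
  "'a::euclidean_space set \<Rightarrow> nat \<Rightarrow> 'i set \<Rightarrow> ('i \<Rightarrow> ('a \<Rightarrow> real) \<Rightarrow> ('a \<Rightarrow> real)) \<Rightarrow> bool" where
  "collectively_compact \<Omega> q I T \<longleftrightarrow>
     (\<forall>i\<in>I. \<forall>v. Cq_on \<Omega> q v \<longrightarrow> Cq_on \<Omega> q (T i v)) \<and>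
     (\<forall>i\<in>I. \<forall>v w a b. Cq_on \<Omega> q v \<longrightarrow> Cq_on \<Omega> q w \<longrightarrow>
        (\<forall>x\<in>closure \<Omega>. T i (\<lambda>y. a * v y + b * w y) x = a * T i v x + b * T i w x)) \<and>
     (\<forall>i\<in>I. \<exists>C. \<forall>v. Cq_on \<Omega> q v \<longrightarrow> Cq_norm \<Omega> q (T i v) \<le> C * Cq_norm \<Omega> q v) \<and>
     Cq_relcompact \<Omega> q {T i v | i v. i \<in> I \<and> Cq_on \<Omega> q v \<and> Cq_norm \<Omega> q v \<le> 1}"

end

(* Each operator of the family maps v to a finite combination  x |-> Sum_i c_i * k (x, y_i)  with
   nodes y_i in the closure of Omega and Sum_i |c_i| <= CQ * |CI| * ||v||, by the stability of the two
   schemes.  The x-derivatives of order at most q of such a combination are the same combination of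
   the x-derivatives of k, extended continuously to the closure.  These extensions are bounded and
   uniformly continuous on the compact set closure Omega x closure Omega, so the derivatives of the
   combinations are uniformly bounded and equicontinuous.  Arzela-Ascoli, applied to the finitely
   many derivatives at once, yields a subsequence along which all of them converge uniformly; since
   uniform convergence of derivatives passes to the limit, the limits are the derivatives of a C^q
   function, which is the C^q limit of the subsequence. *)

theory Submission
  imports Defs "HOL-Complex_Analysis.Great_Picard"
begin

section \<open>Uniform limits and derivatives\<close>

lemma has_real_derivative_uniform_limit:
  fixes f f' :: "nat \<Rightarrow> real \<Rightarrow> real"
  assumes "convex S" "open S" "x \<in> S"
    and deriv: "\<And>n t. t \<in> S \<Longrightarrow> (f n has_real_derivative f' n t) (at t)"
    and lim': "uniform_limit S f' g' sequentially"
    and lim: "\<And>t. t \<in> S \<Longrightarrow> (\<lambda>n. f n t) \<longlonglongrightarrow> g t"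
  shows "(g has_real_derivative g' x) (at x)"
proof -
  have "\<exists>h. \<forall>t\<in>S. (\<lambda>n. f n t) \<longlonglongrightarrow> h t \<and> (h has_derivative (\<lambda>u. g' t * u)) (at t within S)"
  proof (rule has_derivative_sequence[where f = f and f' = "\<lambda>n t u. f' n t * u" and g' = "\<lambda>t u. g' t * u"])
    show "(f n has_derivative (\<lambda>u. f' n t * u)) (at t within S)" if "t \<in> S" for n t
      using deriv[OF that] by (simp add: has_field_derivative_at_within has_field_derivative_imp_has_derivative)
    show "\<forall>\<^sub>F n in sequentially. \<forall>t\<in>S. \<forall>u. norm (f' n t * u - g' t * u) \<le> e * norm u"
      if "e > 0" for e
      using uniform_limitD[OF lim' that]
      by eventually_elim
         (fastforce simp: dist_real_def abs_mult left_diff_distrib[symmetric] intro: mult_right_mono less_imp_le)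
  qed (use assms lim in blast)+
  then obtain h where h: "\<And>t. t \<in> S \<Longrightarrow> (\<lambda>n. f n t) \<longlonglongrightarrow> h t"
    and h': "(h has_derivative (\<lambda>u. g' x * u)) (at x within S)"
    using \<open>x \<in> S\<close> by blast
  have "(h has_real_derivative g' x) (at x)"
    using h' at_within_open[OF \<open>x \<in> S\<close> \<open>open S\<close>] by (simp add: has_field_derivative_def)
  then show ?thesis
    by (rule has_field_derivative_transform_within_open[OF _ \<open>open S\<close> \<open>x \<in> S\<close>])
       (use h lim LIMSEQ_unique in blast)
qed

lemma uniform_limit_compose_right:
  assumes "uniform_limit S f g F" "h ` T \<subseteq> S"
  shows "uniform_limit T (\<lambda>n x. f n (h x)) (\<lambda>x. g (h x)) F"
proof (rule uniform_limitI)
  fix e :: real assume "e > 0"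
  from uniform_limitD[OF assms(1) this] show "\<forall>\<^sub>F n in F. \<forall>x\<in>T. dist (f n (h x)) (g (h x)) < e"
    by eventually_elim (use assms(2) in blast)
qed

lemma Arzela_Ascoli_finite:
  fixes F :: "nat \<Rightarrow> 'l \<Rightarrow> 'a::euclidean_space \<Rightarrow> real"
  assumes "finite L" "compact S"
    and "\<And>l. l \<in> L \<Longrightarrow> \<exists>M. \<forall>n. \<forall>x\<in>S. \<bar>F n l x\<bar> \<le> M"
    and "\<And>l x e. l \<in> L \<Longrightarrow> x \<in> S \<Longrightarrow> 0 < e \<Longrightarrow>
           \<exists>d>0. \<forall>n y. y \<in> S \<and> norm (x - y) < d \<longrightarrow> \<bar>F n l x - F n l y\<bar> < e"
  shows "\<exists>r H. strict_mono r \<and> (\<forall>l\<in>L. uniform_limit S (\<lambda>n. F (r n) l) (H l) sequentially)"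
  using assms(1,3,4)
proof (induction L arbitrary: F rule: finite_induct)
  case empty
  show ?case using strict_mono_id by blast
next
  case (insert l L)
  obtain M where M: "\<forall>n. \<forall>x\<in>S. \<bar>F n l x\<bar> \<le> M" using insert.prems(1) by blast
  obtain g and s :: "nat \<Rightarrow> nat" where s: "strict_mono s"
    and conv: "\<And>e. 0 < e \<Longrightarrow> \<exists>N. \<forall>n x. n \<ge> N \<and> x \<in> S \<longrightarrow> norm (F (s n) l x - g x) < e"
  proof (rule Arzela_Ascoli[OF \<open>compact S\<close>, of "\<lambda>n. F n l" M])
    show "norm (F n l x) \<le> M" if "x \<in> S" for n x using M that by auto
    show "\<exists>d>0. \<forall>n y. y \<in> S \<and> norm (x - y) < d \<longrightarrow> norm (F n l x - F n l y) < e"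
      if "x \<in> S" "0 < e" for x e using insert.prems(2)[of l x e] that by simp
  qed blast
  have lim_l: "uniform_limit S (\<lambda>n. F (s n) l) g sequentially"
    unfolding uniform_limit_sequentially_iff dist_norm
  proof (intro allI impI)
    fix e :: real assume "e > 0"
    obtain N where "\<forall>n x. n \<ge> N \<and> x \<in> S \<longrightarrow> norm (F (s n) l x - g x) < e" using conv[OF \<open>e > 0\<close>] by blast
    then show "\<exists>N. \<forall>n\<ge>N. \<forall>x\<in>S. norm (F (s n) l x - g x) < e" by blast
  qed
  have "\<exists>r H. strict_mono r \<and> (\<forall>l'\<in>L. uniform_limit S (\<lambda>n. F (s (r n)) l') (H l') sequentially)"
  proof (rule insert.IH)
    show "\<exists>M. \<forall>n. \<forall>x\<in>S. \<bar>F (s n) l' x\<bar> \<le> M" if "l' \<in> L" for l'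
      using insert.prems(1)[of l'] that by blast
    show "\<exists>d>0. \<forall>n y. y \<in> S \<and> norm (x - y) < d \<longrightarrow> \<bar>F (s n) l' x - F (s n) l' y\<bar> < e"
      if "l' \<in> L" "x \<in> S" "0 < e" for l' x e
      using insert.prems(2)[of l' x e] that by blast
  qed
  then obtain r H where r: "strict_mono r"
    and lim_L: "\<forall>l'\<in>L. uniform_limit S (\<lambda>n. F (s (r n)) l') (H l') sequentially"
    by blast
  have "uniform_limit S (\<lambda>n. F (s (r n)) l) g sequentially"
    using filterlim_compose[OF lim_l filterlim_subseq[OF r]] by (simp add: o_def)
  then have "\<forall>l'\<in>insert l L. uniform_limit S (\<lambda>n. F ((s \<circ> r) n) l') ((H(l := g)) l') sequentially"
    using lim_L by auto
  moreover have "strict_mono (s \<circ> r)" using s r by (rule strict_mono_o)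
  ultimately show ?case by blast
qed

lemma line_in_open_set:
  assumes "open \<Omega>" "x \<in> \<Omega>" "b \<in> Basis"
  obtains e where "e > 0" "\<And>t. \<bar>t\<bar> < e \<Longrightarrow> x + t *\<^sub>R b \<in> \<Omega>"
proof -
  obtain e where "e > 0" "ball x e \<subseteq> \<Omega>" using assms(1,2) open_contains_ball by blast
  moreover have "x + t *\<^sub>R b \<in> ball x e" if "\<bar>t\<bar> < e" for t
    using that assms(3) by (simp add: dist_norm norm_Basis)
  ultimately show ?thesis using that by blast
qed

lemma has_real_derivative_along_line_cong:
  assumes "open \<Omega>" "x \<in> \<Omega>" "b \<in> Basis" "\<And>y. y \<in> \<Omega> \<Longrightarrow> f y = g y"
    and "((\<lambda>t. f (x + t *\<^sub>R b)) has_real_derivative D) (at 0)"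
  shows "((\<lambda>t. g (x + t *\<^sub>R b)) has_real_derivative D) (at 0)"
proof -
  obtain e where "e > 0" "\<And>t. \<bar>t\<bar> < e \<Longrightarrow> x + t *\<^sub>R b \<in> \<Omega>"
    using line_in_open_set assms(1-3) by blast
  then show ?thesis
    by (intro has_field_derivative_transform_within_open[OF assms(5), of "ball 0 e"]) (auto simp: assms(4))
qed

lemma has_real_derivative_along_line_uniform_limit:
  fixes f f' :: "nat \<Rightarrow> 'a::euclidean_space \<Rightarrow> real"
  assumes "open \<Omega>" "x \<in> \<Omega>" "b \<in> Basis"
    and deriv: "\<And>n y. y \<in> \<Omega> \<Longrightarrow> ((\<lambda>s. f n (y + s *\<^sub>R b)) has_real_derivative f' n y) (at 0)"
    and lim': "uniform_limit \<Omega> f' g' sequentially"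
    and lim: "\<And>y. y \<in> \<Omega> \<Longrightarrow> (\<lambda>n. f n y) \<longlonglongrightarrow> g y"
  shows "((\<lambda>s. g (x + s *\<^sub>R b)) has_real_derivative g' x) (at 0)"
proof -
  obtain e where e: "e > 0" "\<And>t. \<bar>t\<bar> < e \<Longrightarrow> x + t *\<^sub>R b \<in> \<Omega>"
    using line_in_open_set assms(1-3) by blast
  have "((\<lambda>s. g (x + s *\<^sub>R b)) has_real_derivative g' (x + 0 *\<^sub>R b)) (at 0)"
  proof (rule has_real_derivative_uniform_limit[where S = "ball 0 e"
        and f = "\<lambda>n s. f n (x + s *\<^sub>R b)" and f' = "\<lambda>n s. f' n (x + s *\<^sub>R b)"])
    show "uniform_limit (ball 0 e) (\<lambda>n s. f' n (x + s *\<^sub>R b)) (\<lambda>s. g' (x + s *\<^sub>R b)) sequentially"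
      by (rule uniform_limit_compose_right[OF lim']) (auto intro: e(2))
    fix n and t :: real assume "t \<in> ball 0 e"
    then have line: "x + t *\<^sub>R b \<in> \<Omega>" using e(2) by simp
    then show "(\<lambda>n. f n (x + t *\<^sub>R b)) \<longlonglongrightarrow> g (x + t *\<^sub>R b)" by (rule lim)
    have "((\<lambda>s. f n (x + (s + t) *\<^sub>R b)) has_real_derivative f' n (x + t *\<^sub>R b)) (at 0)"
      using deriv[OF line] by (simp add: algebra_simps)
    then show "((\<lambda>s. f n (x + s *\<^sub>R b)) has_real_derivative f' n (x + t *\<^sub>R b)) (at t)"
      using DERIV_shift[of "\<lambda>s. f n (x + s *\<^sub>R b)" _ 0 t] by simp
  qed (use e(1) in auto)
  then show ?thesis by simp
qed

section \<open>Derivative systems of \<open>C\<^sup>q\<close> functions\<close>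

definition basis_lists :: "nat \<Rightarrow> 'a::euclidean_space list set" where
  "basis_lists q = {bs. set bs \<subseteq> Basis \<and> length bs \<le> q}"

lemma finite_basis_lists: "finite (basis_lists q)"
  unfolding basis_lists_def by (rule finite_lists_length_le) simp

lemma Nil_in_basis_lists [simp]: "[] \<in> basis_lists q"
  by (simp add: basis_lists_def)

lemma Cons_in_basis_listsD: "b # bs \<in> basis_lists q \<Longrightarrow> b \<in> Basis \<and> bs \<in> basis_lists q"
  by (auto simp: basis_lists_def)

text \<open>\<open>D bs\<close> plays the role of the continuous extension to the closure of the partial
  derivative \<open>dpart bs \<phi>\<close>.\<close>
definition has_Cq_derivs ::
  "'a::euclidean_space set \<Rightarrow> nat \<Rightarrow> ('a \<Rightarrow> real) \<Rightarrow> ('a list \<Rightarrow> 'a \<Rightarrow> real) \<Rightarrow> bool" where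
  "has_Cq_derivs \<Omega> q \<phi> D \<longleftrightarrow>
     (\<forall>x\<in>closure \<Omega>. \<phi> x = D [] x) \<and>
     (\<forall>bs\<in>basis_lists q. continuous_on (closure \<Omega>) (D bs)) \<and>
     (\<forall>b bs x. b # bs \<in> basis_lists q \<longrightarrow> x \<in> \<Omega> \<longrightarrow>
        ((\<lambda>t. D bs (x + t *\<^sub>R b)) has_real_derivative D (b # bs) x) (at 0))"

lemma has_Cq_derivsD:
  assumes "has_Cq_derivs \<Omega> q \<phi> D"
  shows "x \<in> closure \<Omega> \<Longrightarrow> \<phi> x = D [] x"
    and "bs \<in> basis_lists q \<Longrightarrow> continuous_on (closure \<Omega>) (D bs)"
    and "b # bs \<in> basis_lists q \<Longrightarrow> x \<in> \<Omega> \<Longrightarrow>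
           ((\<lambda>t. D bs (x + t *\<^sub>R b)) has_real_derivative D (b # bs) x) (at 0)"
  using assms unfolding has_Cq_derivs_def by blast+

lemma has_Cq_derivs_dpart:
  assumes "has_Cq_derivs \<Omega> q \<phi> D" "open \<Omega>" "bs \<in> basis_lists q" "x \<in> \<Omega>"
  shows "dpart bs \<phi> x = D bs x"
  using assms(3,4)
proof (induction bs arbitrary: x)
  case Nil
  then show ?case using has_Cq_derivsD(1)[OF assms(1)] closure_subset by auto
next
  case (Cons b bs)
  have b: "b \<in> Basis" and bs: "bs \<in> basis_lists q" using Cons_in_basis_listsD[OF Cons.prems(1)] by auto
  have "((\<lambda>t. dpart bs \<phi> (x + t *\<^sub>R b)) has_real_derivative D (b # bs) x) (at 0)"
    using has_real_derivative_along_line_cong[OF assms(2) Cons.prems(2) b _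
        has_Cq_derivsD(3)[OF assms(1) Cons.prems]] Cons.IH[OF bs] by auto
  then show ?case by (simp add: DERIV_imp_deriv)
qed

lemma has_Cq_derivs_dpart_deriv:
  assumes "has_Cq_derivs \<Omega> q \<phi> D" "open \<Omega>" "b # bs \<in> basis_lists q" "x \<in> \<Omega>"
  shows "((\<lambda>t. dpart bs \<phi> (x + t *\<^sub>R b)) has_real_derivative D (b # bs) x) (at 0)"
proof -
  have b: "b \<in> Basis" and bs: "bs \<in> basis_lists q" using Cons_in_basis_listsD[OF assms(3)] by auto
  show ?thesis
    by (rule has_real_derivative_along_line_cong[OF assms(2,4) b _ has_Cq_derivsD(3)[OF assms(1,3,4)]])
       (simp add: has_Cq_derivs_dpart[OF assms(1,2) bs])
qed

lemma has_Cq_derivs_imp_Cq_on: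
  assumes "has_Cq_derivs \<Omega> q \<phi> D" "open \<Omega>"
  shows "Cq_on \<Omega> q \<phi>"
  unfolding Cq_on_def
proof (intro conjI allI impI)
  show "continuous_on (closure \<Omega>) \<phi>"
    using continuous_on_eq[OF has_Cq_derivsD(2)[OF assms(1) Nil_in_basis_lists]]
      has_Cq_derivsD(1)[OF assms(1)] by metis
  fix bs :: "'a list" assume "set bs \<subseteq> Basis \<and> bs \<noteq> [] \<and> length bs \<le> q"
  then obtain b bs' where bs: "bs = b # bs'" "b # bs' \<in> basis_lists q"
    by (cases bs) (auto simp: basis_lists_def)
  show "\<forall>x\<in>\<Omega>. (\<lambda>t. dpart (tl bs) \<phi> (x + t *\<^sub>R hd bs)) differentiable (at 0)"
  proof
    fix x assume "x \<in> \<Omega>"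
    with has_Cq_derivs_dpart_deriv[OF assms bs(2)]
    show "(\<lambda>t. dpart (tl bs) \<phi> (x + t *\<^sub>R hd bs)) differentiable (at 0)"
      unfolding bs(1) real_differentiable_def by auto
  qed
  show "\<exists>g. continuous_on (closure \<Omega>) g \<and> (\<forall>x\<in>\<Omega>. g x = dpart bs \<phi> x)"
    using has_Cq_derivsD(2)[OF assms(1) bs(2)] has_Cq_derivs_dpart[OF assms bs(2)] bs(1) by auto
qed

lemma has_Cq_derivs_diff:
  assumes "has_Cq_derivs \<Omega> q \<phi> D" "has_Cq_derivs \<Omega> q \<psi> E"
  shows "has_Cq_derivs \<Omega> q (\<lambda>x. \<phi> x - \<psi> x) (\<lambda>bs x. D bs x - E bs x)"
  using assms unfolding has_Cq_derivs_def by (auto intro: continuous_on_diff DERIV_diff)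

lemma has_Cq_derivs_sum:
  assumes "\<And>i. i \<in> I \<Longrightarrow> has_Cq_derivs \<Omega> q (\<phi> i) (D i)"
  shows "has_Cq_derivs \<Omega> q (\<lambda>x. \<Sum>i\<in>I. c i * \<phi> i x) (\<lambda>bs x. \<Sum>i\<in>I. c i * D i bs x)"
  using assms unfolding has_Cq_derivs_def
  by (auto intro!: continuous_on_sum continuous_on_mult continuous_on_const DERIV_sum DERIV_cmult)

lemma has_Cq_derivs_uniform_limit:
  assumes "open \<Omega>" "\<And>n. has_Cq_derivs \<Omega> q (\<phi> n) (D n)"
    and lim: "\<And>bs. bs \<in> basis_lists q \<Longrightarrow> uniform_limit (closure \<Omega>) (\<lambda>n. D n bs) (E bs) sequentially"
  shows "has_Cq_derivs \<Omega> q (E []) E"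
  unfolding has_Cq_derivs_def
proof (intro conjI ballI allI impI)
  show "continuous_on (closure \<Omega>) (E bs)" if "bs \<in> basis_lists q" for bs
    using has_Cq_derivsD(2)[OF assms(2) that] lim[OF that]
    by (intro uniform_limit_theorem[where f = "\<lambda>n. D n bs"]) auto
  fix b :: 'a and bs x assume "b # bs \<in> basis_lists q" "x \<in> \<Omega>"
  then have b: "b \<in> Basis" and bs: "bs \<in> basis_lists q" using Cons_in_basis_listsD by auto
  have lim_\<Omega>: "uniform_limit \<Omega> (\<lambda>n. D n bs') (E bs') sequentially" if "bs' \<in> basis_lists q" for bs'
    using uniform_limit_on_subset[OF lim[OF that] closure_subset] .
  show "((\<lambda>t. E bs (x + t *\<^sub>R b)) has_real_derivative E (b # bs) x) (at 0)"
  proof (rule has_real_derivative_along_line_uniform_limit[OF assms(1) \<open>x \<in> \<Omega>\<close> b])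
    show "((\<lambda>s. D n bs (y + s *\<^sub>R b)) has_real_derivative D n (b # bs) y) (at 0)" if "y \<in> \<Omega>" for n y
      using has_Cq_derivsD(3)[OF assms(2) \<open>b # bs \<in> basis_lists q\<close> that] .
    show "uniform_limit \<Omega> (\<lambda>n. D n (b # bs)) (E (b # bs)) sequentially"
      by (rule lim_\<Omega>) fact
    show "(\<lambda>n. D n bs y) \<longlonglongrightarrow> E bs y" if "y \<in> \<Omega>" for y
      using tendsto_uniform_limitI[OF lim_\<Omega>[OF bs] that] .
  qed
qed simp

section \<open>The \<open>C\<^sup>q\<close> norm\<close>

lemma supn_le:
  assumes "\<And>x. x \<in> S \<Longrightarrow> \<bar>g x\<bar> \<le> E" "0 \<le> E"
  shows "supn S g \<le> E"
  using assms by (auto simp: supn_def intro: cSUP_least)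

lemma abs_le_supn:
  assumes "x \<in> S" "\<And>x. x \<in> S \<Longrightarrow> \<bar>g x\<bar> \<le> E"
  shows "\<bar>g x\<bar> \<le> supn S g"
  using assms by (auto simp: supn_def intro!: cSUP_upper bdd_aboveI2)

lemma supn_nonneg:
  assumes "\<And>x. x \<in> S \<Longrightarrow> \<bar>g x\<bar> \<le> E"
  shows "0 \<le> supn S g"
proof (cases "S = {}")
  case False
  then obtain x where "x \<in> S" by blast
  then have "\<bar>g x\<bar> \<le> supn S g" using assms by (rule abs_le_supn)
  then show ?thesis by (rule order.trans[OF abs_ge_zero])
qed (simp add: supn_def)

lemma mfact_ge_1: "1 \<le> mfact \<alpha>"
  unfolding mfact_def by (rule prod_ge_1) simp

lemma zero_in_mindex: "(\<lambda>_. 0) \<in> mindex q"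
  by (simp add: mindex_def)

lemma finite_mindex: "finite (mindex q :: ('a::euclidean_space \<Rightarrow> nat) set)"
proof -
  have "mindex q \<subseteq> {\<alpha>. \<forall>b. (b \<in> Basis \<longrightarrow> \<alpha> b \<in> {..q}) \<and> (b \<notin> Basis \<longrightarrow> \<alpha> b = 0)}"
    by (auto simp: mindex_def intro: order.trans[OF member_le_sum])
  moreover have "finite {\<alpha>::'a \<Rightarrow> nat. \<forall>b. (b \<in> Basis \<longrightarrow> \<alpha> b \<in> {..q}) \<and> (b \<notin> Basis \<longrightarrow> \<alpha> b = 0)}"
    by (rule finite_set_of_finite_funs) auto
  ultimately show ?thesis by (rule finite_subset)
qed

lemma count_list_replicate: "count_list (replicate n a) b = (if a = b then n else 0)"
  by (induction n) auto

lemma exists_list_with_counts: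
  assumes "finite A" "\<And>b. b \<notin> A \<Longrightarrow> \<alpha> b = 0"
  shows "\<exists>bs. set bs \<subseteq> A \<and> (\<forall>b. count_list bs b = \<alpha> b)"
  using assms
proof (induction A arbitrary: \<alpha> rule: finite_induct)
  case empty
  then show ?case by auto
next
  case (insert a A)
  have "\<exists>bs. set bs \<subseteq> A \<and> (\<forall>b. count_list bs b = (\<alpha>(a := 0)) b)"
    using insert.prems by (intro insert.IH) auto
  then obtain bs where "set bs \<subseteq> A" "\<forall>b. count_list bs b = (\<alpha>(a := 0)) b" by blast
  then show ?case
    by (intro exI[of _ "replicate (\<alpha> a) a @ bs"]) (auto simp: count_list_replicate)
qed

lemma dmulti_eq_dpart:
  assumes "\<alpha> \<in> mindex q"
  obtains bs where "bs \<in> basis_lists q" "\<And>v. dmulti \<alpha> v = dpart bs v"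
proof -
  let ?P = "\<lambda>bs. set bs \<subseteq> Basis \<and> (\<forall>b. count_list bs b = \<alpha> b)"
  have "\<exists>bs. ?P bs" using assms by (intro exists_list_with_counts) (auto simp: mindex_def)
  then have P: "?P (SOME bs. ?P bs)" by (rule someI_ex)
  then have "length (SOME bs. ?P bs) = (\<Sum>b\<in>Basis. \<alpha> b)"
    using sum_count_set[of "SOME bs. ?P bs" Basis] by simp
  with P assms have "(SOME bs. ?P bs) \<in> basis_lists q" by (simp add: basis_lists_def mindex_def)
  then show ?thesis using that by (simp add: dmulti_def)
qed

lemma dmulti_zero: "dmulti (\<lambda>_. 0) v = v"
proof -
  let ?P = "\<lambda>bs::'a list. set bs \<subseteq> Basis \<and> (\<forall>b. count_list bs b = 0)"
  have "?P []" by simp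
  then have "?P (SOME bs. ?P bs)" by (rule someI)
  then have "(SOME bs. ?P bs) = []" by (simp add: count_list_0_iff)
  then show ?thesis by (simp add: dmulti_def)
qed

lemma Cq_norm_le:
  fixes \<Omega> :: "'a::euclidean_space set" and E :: real
  assumes "has_Cq_derivs \<Omega> q \<phi> D" "open \<Omega>" "0 \<le> E"
    and "\<And>bs x. bs \<in> basis_lists q \<Longrightarrow> x \<in> \<Omega> \<Longrightarrow> \<bar>D bs x\<bar> \<le> E"
  shows "0 \<le> Cq_norm \<Omega> q \<phi>" "Cq_norm \<Omega> q \<phi> \<le> card (mindex q :: ('a \<Rightarrow> nat) set) * E"
proof -
  have "0 \<le> supn \<Omega> (dmulti \<alpha> \<phi>) / mfact \<alpha> \<and> supn \<Omega> (dmulti \<alpha> \<phi>) / mfact \<alpha> \<le> E"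
    if \<alpha>: "\<alpha> \<in> mindex q" for \<alpha> :: "'a \<Rightarrow> nat"
  proof -
    obtain bs where bs: "bs \<in> basis_lists q" "\<And>v. dmulti \<alpha> v = dpart bs v"
      using dmulti_eq_dpart[OF \<alpha>] by blast
    have bound: "\<bar>dmulti \<alpha> \<phi> x\<bar> \<le> E" if "x \<in> \<Omega>" for x
      using assms(4)[OF bs(1) that] has_Cq_derivs_dpart[OF assms(1,2) bs(1) that] bs(2) by simp
    have "0 \<le> supn \<Omega> (dmulti \<alpha> \<phi>)" "supn \<Omega> (dmulti \<alpha> \<phi>) \<le> E"
      using supn_nonneg[of \<Omega> "dmulti \<alpha> \<phi>", OF bound] supn_le[of \<Omega> "dmulti \<alpha> \<phi>", OF bound assms(3)]
      by auto
    moreover have "E \<le> E * mfact \<alpha>" using assms(3) mfact_ge_1[of \<alpha>] by (simp add: mult_le_cancel_left1)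
    ultimately show ?thesis using mfact_ge_1[of \<alpha>] by (auto simp: divide_le_eq)
  qed
  then show "0 \<le> Cq_norm \<Omega> q \<phi>" "Cq_norm \<Omega> q \<phi> \<le> card (mindex q :: ('a \<Rightarrow> nat) set) * E"
    unfolding Cq_norm_def by (auto intro: sum_nonneg sum_bounded_above)
qed

lemma Cq_on_dpart_bounded:
  assumes "Cq_on \<Omega> q v" "bounded \<Omega>" "bs \<in> basis_lists q"
  obtains B where "\<And>x. x \<in> \<Omega> \<Longrightarrow> \<bar>dpart bs v x\<bar> \<le> B"
proof -
  obtain g where g: "continuous_on (closure \<Omega>) g" "\<And>x. x \<in> \<Omega> \<Longrightarrow> g x = dpart bs v x"
  proof (cases "bs = []")
    case True
    then show ?thesis using that[of v] assms(1) by (simp add: Cq_on_def)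
  next
    case False
    then show ?thesis using that assms(1,3) by (auto simp: Cq_on_def basis_lists_def)
  qed
  have "compact (g ` closure \<Omega>)"
    using compact_continuous_image[OF g(1)] assms(2) by (simp add: compact_closure)
  then obtain B where "\<And>x. x \<in> closure \<Omega> \<Longrightarrow> \<bar>g x\<bar> \<le> B"
    using compact_imp_bounded bounded_iff by (metis image_eqI real_norm_def)
  then show ?thesis using that g(2) closure_subset by (metis subsetD)
qed

lemma supn_le_Cq_norm:
  fixes \<Omega> :: "'a::euclidean_space set"
  assumes "Cq_on \<Omega> q v" "bounded \<Omega>"
  shows "supn \<Omega> v \<le> Cq_norm \<Omega> q v"
proof -
  have nonneg: "0 \<le> supn \<Omega> (dmulti \<alpha> v) / mfact \<alpha>" if \<alpha>: "\<alpha> \<in> mindex q" for \<alpha> :: "'a \<Rightarrow> nat"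
  proof -
    obtain bs where bs: "bs \<in> basis_lists q" "\<And>v. dmulti \<alpha> v = dpart bs v"
      using dmulti_eq_dpart[OF \<alpha>] by blast
    obtain B where "\<And>x. x \<in> \<Omega> \<Longrightarrow> \<bar>dmulti \<alpha> v x\<bar> \<le> B"
      using Cq_on_dpart_bounded[OF assms bs(1)] bs(2) by metis
    then have "0 \<le> supn \<Omega> (dmulti \<alpha> v)" by (rule supn_nonneg)
    then show ?thesis using mfact_ge_1[of \<alpha>] by simp
  qed
  have "supn \<Omega> (dmulti (\<lambda>_. 0) v) / mfact (\<lambda>_::'a. 0::nat) \<le> Cq_norm \<Omega> q v"
    unfolding Cq_norm_def using zero_in_mindex nonneg finite_mindex by (rule member_le_sum) auto
  then show ?thesis by (simp add: dmulti_zero mfact_def)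
qed

lemma abs_le_supn_closure:
  assumes "Cq_on \<Omega> q v" "bounded \<Omega>" "x \<in> closure \<Omega>"
  shows "\<bar>v x\<bar> \<le> supn \<Omega> v"
proof -
  obtain B where B: "\<And>x. x \<in> \<Omega> \<Longrightarrow> \<bar>v x\<bar> \<le> B"
    using Cq_on_dpart_bounded[OF assms(1,2) Nil_in_basis_lists] by auto
  have "\<forall>y\<in>\<Omega>. norm (v y) \<le> supn \<Omega> v" using abs_le_supn[of _ \<Omega> v B] B by simp
  moreover have "continuous_on (closure \<Omega>) v" using assms(1) by (simp add: Cq_on_def)
  ultimately show ?thesis using continuous_on_closure_norm_le assms(3) by fastforce
qed

lemma Cq_norm_diff_tendsto_0:
  fixes \<Omega> :: "'a::euclidean_space set"
  assumes "open \<Omega>" "\<And>n. has_Cq_derivs \<Omega> q (\<phi> n) (D n)" "has_Cq_derivs \<Omega> q \<psi> E"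
    and lim: "\<And>bs. bs \<in> basis_lists q \<Longrightarrow> uniform_limit (closure \<Omega>) (\<lambda>n. D n bs) (E bs) sequentially"
  shows "(\<lambda>n. Cq_norm \<Omega> q (\<lambda>x. \<phi> n x - \<psi> x)) \<longlonglongrightarrow> 0"
proof (rule LIMSEQ_I)
  fix e :: real assume "e > 0"
  let ?K = "real (card (mindex q :: ('a \<Rightarrow> nat) set))"
  define e' where "e' = e / (?K + 1)"
  have "e' > 0" "?K * e' < e" using \<open>e > 0\<close> by (simp_all add: e'_def field_simps)
  have "\<forall>bs\<in>basis_lists q. \<forall>\<^sub>F n in sequentially. \<forall>x\<in>closure \<Omega>. dist (D n bs x) (E bs x) < e'"
    using uniform_limitD[OF lim \<open>e' > 0\<close>] by blast
  then have "\<forall>\<^sub>F n in sequentially. \<forall>bs\<in>basis_lists q. \<forall>x\<in>closure \<Omega>. dist (D n bs x) (E bs x) < e'"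
    by (rule eventually_ball_finite[OF finite_basis_lists])
  then obtain N where N: "\<forall>n\<ge>N. \<forall>bs\<in>basis_lists q. \<forall>x\<in>closure \<Omega>. dist (D n bs x) (E bs x) < e'"
    unfolding eventually_sequentially by blast
  have close: "\<bar>D n bs x - E bs x\<bar> \<le> e'" if "n \<ge> N" "bs \<in> basis_lists q" "x \<in> \<Omega>" for n bs x
  proof -
    have "dist (D n bs x) (E bs x) < e'" using N that closure_subset by blast
    then show ?thesis by (simp add: dist_real_def)
  qed
  have "norm (Cq_norm \<Omega> q (\<lambda>x. \<phi> n x - \<psi> x) - 0) < e" if "n \<ge> N" for n
  proof -
    note derivs = has_Cq_derivs_diff[OF assms(2)[of n] assms(3)]
    have "0 \<le> Cq_norm \<Omega> q (\<lambda>x. \<phi> n x - \<psi> x)" "Cq_norm \<Omega> q (\<lambda>x. \<phi> n x - \<psi> x) \<le> ?K * e'"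
      using Cq_norm_le[OF derivs assms(1), of e'] close[OF that] \<open>e' > 0\<close> by auto
    then show ?thesis using \<open>?K * e' < e\<close> by simp
  qed
  then show "\<exists>N. \<forall>n\<ge>N. norm (Cq_norm \<Omega> q (\<lambda>x. \<phi> n x - \<psi> x) - 0) < e" by blast
qed

lemma Cq_relcompact_subset: "Cq_relcompact \<Omega> q T \<Longrightarrow> S \<subseteq> T \<Longrightarrow> Cq_relcompact \<Omega> q S"
  unfolding Cq_relcompact_def by blast

section \<open>Combinations of kernel sections\<close>

lemma abs_sum_mult_le:
  fixes a c :: "nat \<Rightarrow> real"
  assumes "\<And>i. i < n \<Longrightarrow> \<bar>a i\<bar> \<le> B"
  shows "\<bar>\<Sum>i<n. c i * a i\<bar> \<le> (\<Sum>i<n. \<bar>c i\<bar>) * B"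
proof -
  have "\<bar>\<Sum>i<n. c i * a i\<bar> \<le> (\<Sum>i<n. \<bar>c i\<bar> * \<bar>a i\<bar>)"
    using sum_abs[of "\<lambda>i. c i * a i"] by (simp add: abs_mult)
  also have "\<dots> \<le> (\<Sum>i<n. \<bar>c i\<bar> * B)"
    using assms by (intro sum_mono mult_left_mono) auto
  finally show ?thesis by (simp add: sum_distrib_right)
qed

lemma sum_abs_weighted_rows_le:
  fixes w v :: "nat \<Rightarrow> real" and R :: "nat \<Rightarrow> nat \<Rightarrow> real"
  assumes "(\<Sum>i<n. \<bar>w i\<bar>) \<le> CQ" "\<And>i. i < n \<Longrightarrow> (\<Sum>j<m. \<bar>R i j\<bar>) \<le> CI"
    and "\<And>j. j < m \<Longrightarrow> \<bar>v j\<bar> \<le> V" "0 \<le> V"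
  shows "(\<Sum>i<n. \<bar>w i * (\<Sum>j<m. R i j * v j)\<bar>) \<le> CQ * \<bar>CI\<bar> * V"
proof -
  have "\<bar>\<Sum>j<m. R i j * v j\<bar> \<le> \<bar>CI\<bar> * V" if "i < n" for i
  proof -
    have "\<bar>\<Sum>j<m. R i j * v j\<bar> \<le> (\<Sum>j<m. \<bar>R i j\<bar>) * V" using assms(3) by (rule abs_sum_mult_le)
    also have "\<dots> \<le> \<bar>CI\<bar> * V" using assms(2)[OF that] \<open>0 \<le> V\<close> by (intro mult_right_mono) auto
    finally show ?thesis .
  qed
  then have "(\<Sum>i<n. \<bar>w i * (\<Sum>j<m. R i j * v j)\<bar>) \<le> (\<Sum>i<n. \<bar>w i\<bar> * (\<bar>CI\<bar> * V))"
    by (auto simp: abs_mult intro!: sum_mono mult_left_mono)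
  also have "\<dots> = (\<Sum>i<n. \<bar>w i\<bar>) * (\<bar>CI\<bar> * V)" by (simp add: sum_distrib_right)
  also have "\<dots> \<le> CQ * (\<bar>CI\<bar> * V)" using assms(1) \<open>0 \<le> V\<close> by (intro mult_right_mono) auto
  finally show ?thesis by (simp only: mult.assoc)
qed

locale Cq_kernel =
  fixes \<Omega> :: "'a::euclidean_space set" and q :: nat and k :: "'a \<times> 'a \<Rightarrow> real"
  assumes open_domain: "open \<Omega>" and bounded_domain: "bounded \<Omega>"
    and kernel_Cq: "Cq_on (\<Omega> \<times> \<Omega>) q k"
begin

lemma compact_closure_domain: "compact (closure \<Omega>)"
  using bounded_domain by (simp add: compact_closure)

definition kernel_deriv :: "'a list \<Rightarrow> 'a \<times> 'a \<Rightarrow> real" where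
  "kernel_deriv bs = (if bs = [] then k else
     (SOME g. continuous_on (closure (\<Omega> \<times> \<Omega>)) g \<and>
        (\<forall>z\<in>\<Omega> \<times> \<Omega>. g z = dpart (map (\<lambda>b. (b, 0)) bs) k z)))"

lemma first_argument_basis_lists:
  "bs \<in> basis_lists q \<Longrightarrow> map (\<lambda>b. (b, 0)) bs \<in> (basis_lists q :: ('a \<times> 'a) list set)"
  by (auto simp: basis_lists_def Basis_prod_def)

lemma kernel_deriv:
  assumes "bs \<in> basis_lists q"
  shows kernel_deriv_continuous: "continuous_on (closure \<Omega> \<times> closure \<Omega>) (kernel_deriv bs)"
    and kernel_deriv_eq_dpart: "z \<in> \<Omega> \<times> \<Omega> \<Longrightarrow> kernel_deriv bs z = dpart (map (\<lambda>b. (b, 0)) bs) k z"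
proof -
  have "continuous_on (closure (\<Omega> \<times> \<Omega>)) (kernel_deriv bs) \<and>
    (\<forall>z\<in>\<Omega> \<times> \<Omega>. kernel_deriv bs z = dpart (map (\<lambda>b. (b, 0)) bs) k z)"
  proof (cases "bs = []")
    case True
    then show ?thesis using kernel_Cq by (simp add: kernel_deriv_def Cq_on_def)
  next
    case False
    then have "\<exists>g. continuous_on (closure (\<Omega> \<times> \<Omega>)) g \<and>
        (\<forall>z\<in>\<Omega> \<times> \<Omega>. g z = dpart (map (\<lambda>b. (b, 0)) bs) k z)"
      using kernel_Cq first_argument_basis_lists[OF assms] unfolding Cq_on_def basis_lists_def by auto
    from someI_ex[OF this] show ?thesis using False by (simp add: kernel_deriv_def)
  qed
  then show "continuous_on (closure \<Omega> \<times> closure \<Omega>) (kernel_deriv bs)"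
    and "z \<in> \<Omega> \<times> \<Omega> \<Longrightarrow> kernel_deriv bs z = dpart (map (\<lambda>b. (b, 0)) bs) k z"
    by (auto simp: closure_Times)
qed

lemma kernel_deriv_bounded:
  obtains B where "\<And>bs z. bs \<in> basis_lists q \<Longrightarrow> z \<in> closure \<Omega> \<times> closure \<Omega> \<Longrightarrow> \<bar>kernel_deriv bs z\<bar> \<le> B"
proof -
  have "bounded (\<Union>bs\<in>basis_lists q. kernel_deriv bs ` (closure \<Omega> \<times> closure \<Omega>))"
    using compact_continuous_image[OF kernel_deriv_continuous]
      compact_Times[OF compact_closure_domain compact_closure_domain]
    by (intro bounded_UN finite_basis_lists ballI compact_imp_bounded) blast
  then show ?thesis using that unfolding bounded_iff by fastforce
qed

lemma kernel_deriv_has_derivative_interior: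
  assumes "b # bs \<in> basis_lists q" "x \<in> \<Omega>" "y \<in> \<Omega>"
  shows "((\<lambda>t. kernel_deriv bs (x + t *\<^sub>R b, y)) has_real_derivative kernel_deriv (b # bs) (x, y)) (at 0)"
proof -
  let ?lift = "map (\<lambda>b. (b, 0 :: 'a))"
  have lifted: "(b, 0) # ?lift bs \<in> basis_lists q" and bs: "bs \<in> basis_lists q"
    using first_argument_basis_lists[OF assms(1)] Cons_in_basis_listsD[OF assms(1)] by auto
  let ?L = "(b, 0) # ?lift bs"
  have "\<forall>z\<in>\<Omega> \<times> \<Omega>. (\<lambda>t. dpart (tl ?L) k (z + t *\<^sub>R hd ?L)) differentiable (at 0)"
    using kernel_Cq lifted unfolding Cq_on_def basis_lists_def by blast
  then have "(\<lambda>t. dpart (?lift bs) k ((x, y) + t *\<^sub>R (b, 0))) differentiable (at 0)"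
    using assms(2,3) unfolding list.sel by blast
  then have "((\<lambda>t. dpart (?lift bs) k ((x, y) + t *\<^sub>R (b, 0))) has_real_derivative
      kernel_deriv (b # bs) (x, y)) (at 0)"
    using kernel_deriv_eq_dpart[OF assms(1)] assms(2,3) by (simp add: DERIV_deriv_iff_real_differentiable)
  then have "((\<lambda>t. kernel_deriv bs ((x, y) + t *\<^sub>R (b, 0))) has_real_derivative
      kernel_deriv (b # bs) (x, y)) (at 0)"
    by (rule has_real_derivative_along_line_cong[OF open_Times[OF open_domain open_domain], rotated -1])
       (use assms(2,3) kernel_deriv_eq_dpart[OF bs] Cons_in_basis_listsD[OF lifted] in auto)
  then show ?thesis by simp
qed

lemma uniform_limit_kernel_deriv_section:
  assumes "bs \<in> basis_lists q" "\<And>n. ys n \<in> closure \<Omega>" "ys \<longlonglongrightarrow> y" "y \<in> closure \<Omega>"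
  shows "uniform_limit (closure \<Omega>) (\<lambda>n x. kernel_deriv bs (x, ys n)) (\<lambda>x. kernel_deriv bs (x, y)) sequentially"
proof (rule uniform_limitI)
  fix e :: real assume "e > 0"
  have "uniformly_continuous_on (closure \<Omega> \<times> closure \<Omega>) (kernel_deriv bs)"
    using compact_uniformly_continuous[OF kernel_deriv_continuous[OF assms(1)]]
      compact_Times[OF compact_closure_domain compact_closure_domain] by blast
  then obtain d where "d > 0" and d: "\<And>z z'. z \<in> closure \<Omega> \<times> closure \<Omega> \<Longrightarrow> z' \<in> closure \<Omega> \<times> closure \<Omega> \<Longrightarrow>
      dist z' z < d \<Longrightarrow> dist (kernel_deriv bs z') (kernel_deriv bs z) < e"
    using \<open>e > 0\<close> unfolding uniformly_continuous_on_def by metis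
  from tendstoD[OF assms(3) \<open>d > 0\<close>]
  show "\<forall>\<^sub>F n in sequentially. \<forall>x\<in>closure \<Omega>. dist (kernel_deriv bs (x, ys n)) (kernel_deriv bs (x, y)) < e"
    by eventually_elim (use assms(2,4) in \<open>auto intro!: d simp: dist_Pair_Pair\<close>)
qed

text \<open>The hypothesis on \<open>k\<close> only provides derivatives on \<open>\<Omega> \<times> \<Omega>\<close>; for a node \<open>y\<close> on the
  boundary they are obtained by approximating \<open>y\<close> from inside \<open>\<Omega>\<close>.\<close>
lemma kernel_deriv_has_derivative:
  assumes "b # bs \<in> basis_lists q" "x \<in> \<Omega>" "y \<in> closure \<Omega>"
  shows "((\<lambda>t. kernel_deriv bs (x + t *\<^sub>R b, y)) has_real_derivative kernel_deriv (b # bs) (x, y)) (at 0)"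
proof -
  obtain ys where ys: "\<And>n. ys n \<in> \<Omega>" "ys \<longlonglongrightarrow> y" using closure_sequential assms(3) by blast
  have ys_closure: "ys n \<in> closure \<Omega>" for n using ys(1) closure_subset by blast
  have b: "b \<in> Basis" and bs: "bs \<in> basis_lists q" using Cons_in_basis_listsD[OF assms(1)] by auto
  show ?thesis
  proof (rule has_real_derivative_along_line_uniform_limit[OF open_domain assms(2) b])
    show "((\<lambda>s. kernel_deriv bs (z + s *\<^sub>R b, ys n)) has_real_derivative kernel_deriv (b # bs) (z, ys n)) (at 0)"
      if "z \<in> \<Omega>" for n z
      using kernel_deriv_has_derivative_interior[OF assms(1) that ys(1)] .
    show "uniform_limit \<Omega> (\<lambda>n z. kernel_deriv (b # bs) (z, ys n)) (\<lambda>z. kernel_deriv (b # bs) (z, y)) sequentially"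
      using uniform_limit_kernel_deriv_section[OF assms(1) ys_closure ys(2) assms(3)]
      by (rule uniform_limit_on_subset) (rule closure_subset)
    show "(\<lambda>n. kernel_deriv bs (z, ys n)) \<longlonglongrightarrow> kernel_deriv bs (z, y)" if "z \<in> \<Omega>" for z
      by (rule tendsto_uniform_limitI[OF uniform_limit_kernel_deriv_section[OF bs ys_closure ys(2) assms(3)]])
         (use that closure_subset in blast)
  qed
qed

lemma has_Cq_derivs_kernel_section:
  assumes "y \<in> closure \<Omega>"
  shows "has_Cq_derivs \<Omega> q (\<lambda>x. k (x, y)) (\<lambda>bs x. kernel_deriv bs (x, y))"
  unfolding has_Cq_derivs_def
proof (intro conjI ballI allI impI)
  show "continuous_on (closure \<Omega>) (\<lambda>x. kernel_deriv bs (x, y))" if "bs \<in> basis_lists q" for bs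
    by (rule continuous_on_compose2[OF kernel_deriv_continuous[OF that]])
       (use assms in \<open>auto intro!: continuous_intros\<close>)
qed (use assms kernel_deriv_has_derivative in \<open>auto simp: kernel_deriv_def\<close>)

definition kernel_combinations :: "real \<Rightarrow> ('a \<Rightarrow> real) set" where
  "kernel_combinations M = {(\<lambda>x. \<Sum>i<n. c i * k (x, ys i)) | (n :: nat) c ys.
     (\<forall>i<n. ys i \<in> closure \<Omega>) \<and> (\<Sum>i<n. \<bar>c i\<bar>) \<le> M}"

lemma kernel_combinationsE:
  assumes "f \<in> kernel_combinations M"
  obtains n :: nat and c ys where "f = (\<lambda>x. \<Sum>i<n. c i * k (x, ys i))" "\<And>i. i < n \<Longrightarrow> ys i \<in> closure \<Omega>"
    "(\<Sum>i<n. \<bar>c i\<bar>) \<le> M"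
proof -
  obtain n :: nat and c ys where "f = (\<lambda>x. \<Sum>i<n. c i * k (x, ys i))" "\<forall>i<n. ys i \<in> closure \<Omega>"
    "(\<Sum>i<n. \<bar>c i\<bar>) \<le> M"
    using assms unfolding kernel_combinations_def by blast
  then show ?thesis using that by blast
qed

lemma kernel_combinationsI:
  fixes n :: nat
  assumes "\<And>i. i < n \<Longrightarrow> ys i \<in> closure \<Omega>" "(\<Sum>i<n. \<bar>c i\<bar>) \<le> M"
  shows "(\<lambda>x. \<Sum>i<n. c i * k (x, ys i)) \<in> kernel_combinations M"
  using assms unfolding kernel_combinations_def by blast

lemma kernel_combinations_mono: "M \<le> M' \<Longrightarrow> kernel_combinations M \<subseteq> kernel_combinations M'"
  unfolding kernel_combinations_def by fastforce

lemma has_Cq_derivs_kernel_combination: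
  assumes "\<And>i. i < n \<Longrightarrow> ys i \<in> closure \<Omega>"
  shows "has_Cq_derivs \<Omega> q (\<lambda>x. \<Sum>i<n. c i * k (x, ys i)) (\<lambda>bs x. \<Sum>i<n. c i * kernel_deriv bs (x, ys i))"
  using assms by (intro has_Cq_derivs_sum has_Cq_derivs_kernel_section) auto

lemma kernel_combinations_Cq_on: "f \<in> kernel_combinations M \<Longrightarrow> Cq_on \<Omega> q f"
  by (erule kernel_combinationsE)
     (use has_Cq_derivs_imp_Cq_on[OF has_Cq_derivs_kernel_combination open_domain] in blast)

lemma kernel_combination_derivs_bounded:
  obtains B where "0 \<le> B"
    "\<And>(n :: nat) c ys bs x. (\<And>i. i < n \<Longrightarrow> ys i \<in> closure \<Omega>) \<Longrightarrow> bs \<in> basis_lists q \<Longrightarrow>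
       x \<in> closure \<Omega> \<Longrightarrow> \<bar>\<Sum>i<n. c i * kernel_deriv bs (x, ys i)\<bar> \<le> (\<Sum>i<n. \<bar>c i\<bar>) * B"
proof -
  obtain B where B: "\<And>bs z. bs \<in> basis_lists q \<Longrightarrow> z \<in> closure \<Omega> \<times> closure \<Omega> \<Longrightarrow> \<bar>kernel_deriv bs z\<bar> \<le> B"
    using kernel_deriv_bounded by blast
  have "\<bar>\<Sum>i<n. c i * kernel_deriv bs (x, ys i)\<bar> \<le> (\<Sum>i<n. \<bar>c i\<bar>) * \<bar>B\<bar>"
    if ys: "\<And>i. i < n \<Longrightarrow> ys i \<in> closure \<Omega>" and "bs \<in> basis_lists q" "x \<in> closure \<Omega>"
    for n :: nat and c ys bs x
  proof (rule abs_sum_mult_le[where a = "\<lambda>i. kernel_deriv bs (x, ys i)"])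
    fix i assume "i < n"
    then have "(x, ys i) \<in> closure \<Omega> \<times> closure \<Omega>" using ys that(3) by blast
    then show "\<bar>kernel_deriv bs (x, ys i)\<bar> \<le> \<bar>B\<bar>" by (rule order.trans[OF B[OF that(2)] abs_ge_self])
  qed
  then show ?thesis using that[of "\<bar>B\<bar>"] by simp
qed

lemma Cq_norm_kernel_combinations_le:
  obtains C where "\<And>M f. f \<in> kernel_combinations M \<Longrightarrow> Cq_norm \<Omega> q f \<le> C * M"
proof -
  obtain B where "0 \<le> B" and B: "\<And>(n :: nat) c ys bs x. (\<And>i. i < n \<Longrightarrow> ys i \<in> closure \<Omega>) \<Longrightarrow>
      bs \<in> basis_lists q \<Longrightarrow> x \<in> closure \<Omega> \<Longrightarrow>
      \<bar>\<Sum>i<n. c i * kernel_deriv bs (x, ys i)\<bar> \<le> (\<Sum>i<n. \<bar>c i\<bar>) * B"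
    using kernel_combination_derivs_bounded by blast
  let ?C = "real (card (mindex q :: ('a \<Rightarrow> nat) set)) * B"
  have "Cq_norm \<Omega> q f \<le> ?C * M" if "f \<in> kernel_combinations M" for M f
    using that
  proof (rule kernel_combinationsE)
    fix n :: nat and c ys assume f: "f = (\<lambda>x. \<Sum>i<n. c i * k (x, ys i))"
      and ys: "\<And>i. i < n \<Longrightarrow> ys i \<in> closure \<Omega>" and c: "(\<Sum>i<n. \<bar>c i\<bar>) \<le> M"
    have "\<bar>\<Sum>i<n. c i * kernel_deriv bs (x, ys i)\<bar> \<le> (\<Sum>i<n. \<bar>c i\<bar>) * B"
      if "bs \<in> basis_lists q" "x \<in> \<Omega>" for bs x
      using B[of n ys bs x c, OF ys that(1)] that(2) closure_subset by blast
    then have "Cq_norm \<Omega> q f \<le> real (card (mindex q :: ('a \<Rightarrow> nat) set)) * ((\<Sum>i<n. \<bar>c i\<bar>) * B)"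
      unfolding f using \<open>0 \<le> B\<close>
      by (intro Cq_norm_le(2)[OF has_Cq_derivs_kernel_combination[OF ys] open_domain]) auto
    also have "\<dots> = ?C * (\<Sum>i<n. \<bar>c i\<bar>)" by (simp only: mult_ac)
    also have "\<dots> \<le> ?C * M" using c \<open>0 \<le> B\<close> by (intro mult_left_mono) simp_all
    finally show ?thesis .
  qed
  then show ?thesis using that by blast
qed

lemma kernel_combinations_equicontinuous:
  assumes "bs \<in> basis_lists q" "x \<in> closure \<Omega>" "e > 0" "0 \<le> M"
  obtains d where "d > 0"
    "\<And>(n :: nat) c ys y. (\<And>i. i < n \<Longrightarrow> ys i \<in> closure \<Omega>) \<Longrightarrow> (\<Sum>i<n. \<bar>c i\<bar>) \<le> M \<Longrightarrow>
       y \<in> closure \<Omega> \<Longrightarrow> norm (x - y) < d \<Longrightarrow>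
       \<bar>(\<Sum>i<n. c i * kernel_deriv bs (x, ys i)) - (\<Sum>i<n. c i * kernel_deriv bs (y, ys i))\<bar> < e"
proof -
  define e' where "e' = e / (M + 1)"
  have "e' > 0" "M * e' < e" using assms(3,4) by (simp_all add: e'_def field_simps)
  have "uniformly_continuous_on (closure \<Omega> \<times> closure \<Omega>) (kernel_deriv bs)"
    using compact_uniformly_continuous[OF kernel_deriv_continuous[OF assms(1)]]
      compact_Times[OF compact_closure_domain compact_closure_domain] by blast
  then obtain d where "d > 0" and d: "\<And>z z'. z \<in> closure \<Omega> \<times> closure \<Omega> \<Longrightarrow> z' \<in> closure \<Omega> \<times> closure \<Omega> \<Longrightarrow>
      dist z' z < d \<Longrightarrow> dist (kernel_deriv bs z') (kernel_deriv bs z) < e'"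
    using \<open>e' > 0\<close> unfolding uniformly_continuous_on_def by metis
  have "\<bar>(\<Sum>i<n. c i * kernel_deriv bs (x, ys i)) - (\<Sum>i<n. c i * kernel_deriv bs (y, ys i))\<bar> < e"
    if ys: "\<And>i. i < n \<Longrightarrow> ys i \<in> closure \<Omega>" and c: "(\<Sum>i<n. \<bar>c i\<bar>) \<le> M"
      and y: "y \<in> closure \<Omega>" "norm (x - y) < d" for n :: nat and c ys y
  proof -
    have "\<bar>kernel_deriv bs (x, ys i) - kernel_deriv bs (y, ys i)\<bar> \<le> e'" if "i < n" for i
      using d[of "(y, ys i)" "(x, ys i)"] ys[OF that] assms(2) y by (simp add: dist_Pair_Pair dist_norm)
    then have "\<bar>\<Sum>i<n. c i * (kernel_deriv bs (x, ys i) - kernel_deriv bs (y, ys i))\<bar> \<le> (\<Sum>i<n. \<bar>c i\<bar>) * e'"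
      by (rule abs_sum_mult_le)
    also have "\<dots> \<le> M * e'" using c \<open>e' > 0\<close> by (simp add: mult_right_mono)
    finally show ?thesis
      using \<open>M * e' < e\<close> by (simp add: sum_subtractf[symmetric] right_diff_distrib)
  qed
  with \<open>d > 0\<close> show ?thesis using that by blast
qed

lemma kernel_combination_derivs_convergent_subseq:
  fixes n :: "nat \<Rightarrow> nat"
  assumes ys: "\<And>m i. i < n m \<Longrightarrow> ys m i \<in> closure \<Omega>" and c: "\<And>m. (\<Sum>i<n m. \<bar>c m i\<bar>) \<le> M"
  obtains r H where "strict_mono r"
    "\<And>bs. bs \<in> basis_lists q \<Longrightarrow> uniform_limit (closure \<Omega>)
       (\<lambda>m x. \<Sum>i<n (r m). c (r m) i * kernel_deriv bs (x, ys (r m) i)) (H bs) sequentially"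
proof -
  have "0 \<le> M" using order.trans[OF sum_nonneg c[of 0]] by simp
  obtain B where "0 \<le> B" and B: "\<And>(n :: nat) c ys bs x. (\<And>i. i < n \<Longrightarrow> ys i \<in> closure \<Omega>) \<Longrightarrow>
      bs \<in> basis_lists q \<Longrightarrow> x \<in> closure \<Omega> \<Longrightarrow>
      \<bar>\<Sum>i<n. c i * kernel_deriv bs (x, ys i)\<bar> \<le> (\<Sum>i<n. \<bar>c i\<bar>) * B"
    using kernel_combination_derivs_bounded by blast
  define F where "F m bs x = (\<Sum>i<n m. c m i * kernel_deriv bs (x, ys m i))" for m bs x
  have "\<exists>r H. strict_mono r \<and>
      (\<forall>bs\<in>basis_lists q. uniform_limit (closure \<Omega>) (\<lambda>m. F (r m) bs) (H bs) sequentially)"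
  proof (rule Arzela_Ascoli_finite[OF finite_basis_lists compact_closure_domain])
    show "\<exists>C. \<forall>m. \<forall>x\<in>closure \<Omega>. \<bar>F m bs x\<bar> \<le> C" if bs: "bs \<in> basis_lists q" for bs
    proof (intro exI allI ballI)
      fix m x assume "x \<in> closure \<Omega>"
      from B[of "n m" "ys m" bs x "c m", OF ys[where m = m] bs this] show "\<bar>F m bs x\<bar> \<le> M * B"
        unfolding F_def using mult_right_mono[OF c[of m] \<open>0 \<le> B\<close>] by linarith
    qed
    show "\<exists>d>0. \<forall>m y. y \<in> closure \<Omega> \<and> norm (x - y) < d \<longrightarrow> \<bar>F m bs x - F m bs y\<bar> < e"
      if bxe: "bs \<in> basis_lists q" "x \<in> closure \<Omega>" "0 < e" for bs x e
    proof -
      obtain d where "d > 0" and d: "\<And>(n :: nat) c ys y. (\<And>i. i < n \<Longrightarrow> ys i \<in> closure \<Omega>) \<Longrightarrow>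
          (\<Sum>i<n. \<bar>c i\<bar>) \<le> M \<Longrightarrow> y \<in> closure \<Omega> \<Longrightarrow> norm (x - y) < d \<Longrightarrow>
          \<bar>(\<Sum>i<n. c i * kernel_deriv bs (x, ys i)) - (\<Sum>i<n. c i * kernel_deriv bs (y, ys i))\<bar> < e"
        using kernel_combinations_equicontinuous[OF bxe \<open>0 \<le> M\<close>] by blast
      have "\<bar>F m bs x - F m bs y\<bar> < e" if "y \<in> closure \<Omega>" "norm (x - y) < d" for m y
        unfolding F_def using d[of "n m" "ys m" "c m", OF ys[where m = m] c[of m] that] .
      then show ?thesis using \<open>d > 0\<close> by blast
    qed
  qed
  then show ?thesis using that unfolding F_def[abs_def] by blast
qed

lemma Cq_relcompact_kernel_combinations: "Cq_relcompact \<Omega> q (kernel_combinations M)"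
  unfolding Cq_relcompact_def
proof (intro allI impI)
  fix f :: "nat \<Rightarrow> 'a \<Rightarrow> real" assume "\<forall>m. f m \<in> kernel_combinations M"
  then have "\<forall>m. \<exists>(n :: nat) c ys. f m = (\<lambda>x. \<Sum>i<n. c i * k (x, ys i)) \<and>
      (\<forall>i<n. ys i \<in> closure \<Omega>) \<and> (\<Sum>i<n. \<bar>c i\<bar>) \<le> M"
    unfolding kernel_combinations_def by blast
  then obtain n :: "nat \<Rightarrow> nat" and c ys where "\<forall>m. f m = (\<lambda>x. \<Sum>i<n m. c m i * k (x, ys m i)) \<and>
      (\<forall>i<n m. ys m i \<in> closure \<Omega>) \<and> (\<Sum>i<n m. \<bar>c m i\<bar>) \<le> M"
    by (auto simp only: choice_iff)
  then have f: "\<And>m. f m = (\<lambda>x. \<Sum>i<n m. c m i * k (x, ys m i))"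
    and ys: "\<And>m i. i < n m \<Longrightarrow> ys m i \<in> closure \<Omega>" and c: "\<And>m. (\<Sum>i<n m. \<bar>c m i\<bar>) \<le> M"
    by auto
  obtain r H where r: "strict_mono r" and lim: "\<And>bs. bs \<in> basis_lists q \<Longrightarrow> uniform_limit (closure \<Omega>)
      (\<lambda>m x. \<Sum>i<n (r m). c (r m) i * kernel_deriv bs (x, ys (r m) i)) (H bs) sequentially"
    using kernel_combination_derivs_convergent_subseq[of n ys c M, OF ys c] by blast
  have derivs: "has_Cq_derivs \<Omega> q (f (r m)) (\<lambda>bs x. \<Sum>i<n (r m). c (r m) i * kernel_deriv bs (x, ys (r m) i))"
    for m unfolding f using ys by (rule has_Cq_derivs_kernel_combination)
  have "has_Cq_derivs \<Omega> q (H []) H"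
    using open_domain derivs lim by (rule has_Cq_derivs_uniform_limit)
  then show "\<exists>r g. strict_mono r \<and> Cq_on \<Omega> q g \<and> (\<lambda>m. Cq_norm \<Omega> q (\<lambda>x. f (r m) x - g x)) \<longlonglongrightarrow> 0"
    using r has_Cq_derivs_imp_Cq_on[OF _ open_domain]
      Cq_norm_diff_tendsto_0[OF open_domain derivs _ lim] by blast
qed

lemma quadrature_reconstruction_in_kernel_combinations:
  fixes n m :: nat
  assumes v: "Cq_on \<Omega> q v" and ys: "\<And>i. i < n \<Longrightarrow> ys i \<in> closure \<Omega>"
    and xs: "\<And>j. j < m \<Longrightarrow> xs j \<in> closure \<Omega>"
    and w: "(\<Sum>i<n. \<bar>w i\<bar>) \<le> CQ" and R: "\<And>i. i < n \<Longrightarrow> (\<Sum>j<m. \<bar>R i j\<bar>) \<le> CI"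
  shows "(\<lambda>x. \<Sum>i<n. w i * k (x, ys i) * (\<Sum>j<m. R i j * v (xs j)))
           \<in> kernel_combinations (CQ * \<bar>CI\<bar> * Cq_norm \<Omega> q v)"
proof -
  obtain B where "\<And>x. x \<in> \<Omega> \<Longrightarrow> \<bar>v x\<bar> \<le> B"
    using Cq_on_dpart_bounded[OF v bounded_domain Nil_in_basis_lists] by auto
  then have "0 \<le> supn \<Omega> v" by (rule supn_nonneg)
  then have "(\<Sum>i<n. \<bar>w i * (\<Sum>j<m. R i j * v (xs j))\<bar>) \<le> CQ * \<bar>CI\<bar> * supn \<Omega> v"
    using w R abs_le_supn_closure[OF v bounded_domain xs] by (intro sum_abs_weighted_rows_le) auto
  also have "\<dots> \<le> CQ * \<bar>CI\<bar> * Cq_norm \<Omega> q v"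
    using supn_le_Cq_norm[OF v bounded_domain] order.trans[OF sum_nonneg w]
    by (intro mult_left_mono) simp_all
  finally have "(\<lambda>x. \<Sum>i<n. (w i * (\<Sum>j<m. R i j * v (xs j))) * k (x, ys i))
      \<in> kernel_combinations (CQ * \<bar>CI\<bar> * Cq_norm \<Omega> q v)"
    using ys by (intro kernel_combinationsI)
  then show ?thesis by (simp add: mult_ac)
qed

end

theorem lemma3p9:
  fixes \<Omega> :: "'a::euclidean_space set" and q :: nat
    and k :: "'a \<times> 'a \<Rightarrow> real"
    and nY :: "real \<Rightarrow> nat" and Y :: "real \<Rightarrow> nat \<Rightarrow> 'a" and w :: "real \<Rightarrow> nat \<Rightarrow> real"
    and nX :: "real \<Rightarrow> nat" and X :: "real \<Rightarrow> nat \<Rightarrow> 'a"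
    and R :: "real \<times> real \<Rightarrow> nat \<Rightarrow> nat \<Rightarrow> real"
    and CQ CI :: real
  assumes "open \<Omega>" and "bounded \<Omega>"
    and "Cq_on (\<Omega> \<times> \<Omega>) q k"
    and "\<And>hY i. hY > 0 \<Longrightarrow> i < nY hY \<Longrightarrow> Y hY i \<in> closure \<Omega>"
    and "filterlim nY at_top (at_right 0)"
    and "\<And>hY. hY > 0 \<Longrightarrow> (\<Sum>i<nY hY. \<bar>w hY i\<bar>) \<le> CQ"
    and "\<And>hX j. hX > 0 \<Longrightarrow> j < nX hX \<Longrightarrow> X hX j \<in> closure \<Omega>"
    and "\<And>hX hY i. hX > 0 \<Longrightarrow> hY > 0 \<Longrightarrow> i < nY hY \<Longrightarrow>
           (\<Sum>j<nX hX. \<bar>R (hX, hY) i j\<bar>) \<le> CI"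
  shows "collectively_compact \<Omega> q {(hX, hY). hX > 0 \<and> hY > 0}
           (\<lambda>(hX, hY) v x. \<Sum>i<nY hY. w hY i * k (x, Y hY i) *
                              (\<Sum>j<nX hX. R (hX, hY) i j * v (X hX j)))"
proof -
  interpret Cq_kernel \<Omega> q k using assms(1-3) by unfold_locales
  let ?I = "{(hX, hY). hX > 0 \<and> hY > 0} :: (real \<times> real) set"
  let ?K = "\<lambda>(hX, hY) v x. \<Sum>i<nY hY. w hY i * k (x, Y hY i) * (\<Sum>j<nX hX. R (hX, hY) i j * v (X hX j))"
  have combination: "?K i v \<in> kernel_combinations (CQ * \<bar>CI\<bar> * Cq_norm \<Omega> q v)"
    if "i \<in> ?I" "Cq_on \<Omega> q v" for i v
    using that by (cases i) (auto intro!: quadrature_reconstruction_in_kernel_combinations assms(4,6-8))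
  obtain C where C: "\<And>M f. f \<in> kernel_combinations M \<Longrightarrow> Cq_norm \<Omega> q f \<le> C * M"
    using Cq_norm_kernel_combinations_le by blast
  have "0 \<le> CQ" using order.trans[OF sum_nonneg assms(6)[of 1]] by simp
  show ?thesis
    unfolding collectively_compact_def
  proof (intro conjI ballI allI impI)
    show "Cq_on \<Omega> q (?K i v)" if "i \<in> ?I" "Cq_on \<Omega> q v" for i v
      using combination[OF that] by (rule kernel_combinations_Cq_on)
    show "?K i (\<lambda>y. a * v y + b * u y) x = a * ?K i v x + b * ?K i u x" for i v u a b x
      by (cases i) (simp add: sum.distrib sum_distrib_left algebra_simps)
    show "\<exists>C'. \<forall>v. Cq_on \<Omega> q v \<longrightarrow> Cq_norm \<Omega> q (?K i v) \<le> C' * Cq_norm \<Omega> q v" if "i \<in> ?I" for i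
      using C[OF combination[OF that]] by (intro exI[of _ "C * CQ * \<bar>CI\<bar>"]) (simp add: mult.assoc)
    have "kernel_combinations (CQ * \<bar>CI\<bar> * Cq_norm \<Omega> q v) \<subseteq> kernel_combinations (CQ * \<bar>CI\<bar>)"
      if "Cq_norm \<Omega> q v \<le> 1" for v
      using that \<open>0 \<le> CQ\<close> by (intro kernel_combinations_mono) (simp add: mult_left_le)
    then show "Cq_relcompact \<Omega> q {?K i v | i v. i \<in> ?I \<and> Cq_on \<Omega> q v \<and> Cq_norm \<Omega> q v \<le> 1}"
      using combination by (intro Cq_relcompact_subset[OF Cq_relcompact_kernel_combinations]) blast
  qed
qed

end
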